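(* Let $k\in\mathbb Z_{>0}$. For $0\le l\le k$ and $N\ge1$, $$d^{(N+1)}_{k,l}(0)=\sum_{l'=0}^k\mathcal D^{l'}_l\,d^{(N)}_{k,l'}(0),\qquad d^{(1)}_{k,l}(0)=l+1,$$ where $\mathcal D^{l'}_l=(\min(l,k-l')+1)\cdot(\min(l',k-l)+1)$.
   Context: The level $k$ Verlinde algebra $\mathcal V_k$ has basis $\pi_0,\dots,\pi_k$ and product $\pi_l\pi_{l'}=\sum_i\pi_i$, the sum over $|l-l'|\le i\le\min(2k-l-l',l+l')$ with $i+l-l'$ even. The integers $d^{(N)}_{k,l}(0)$ are defined by $(\pi_0+2\pi_1+\cdots+(k+1)\pi_k)^N=\sum_{l=0}^kd^{(N)}_{k,l}(0)\pi_l$. *)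

theory Defs
  imports Main
begin

text \<open>Elements of the level k Verlinde algebra V_k are represented by their
coefficient functions nat => int on the basis pi_0, ..., pi_k
(coefficients at indices > k are ignored / zero).\<close>

text \<open>Structure constant: coefficient of pi_i in pi_l * pi_l'.\<close>
definition verlinde_coeff :: "nat \<Rightarrow> nat \<Rightarrow> nat \<Rightarrow> nat \<Rightarrow> int" where
  "verlinde_coeff k l l' i =
     (if \<bar>int l - int l'\<bar> \<le> int i
         \<and> int i \<le> min (2 * int k - int l - int l') (int l + int l')
         \<and> even (int i + int l - int l') then 1 else 0)"

definition verlinde_mult :: "nat \<Rightarrow> (nat \<Rightarrow> int) \<Rightarrow> (nat \<Rightarrow> int) \<Rightarrow> nat \<Rightarrow> int" where
  "verlinde_mult k a b = (\<lambda>i. if i \<le> k then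
       (\<Sum>l\<le>k. \<Sum>l'\<le>k. a l * b l' * verlinde_coeff k l l' i) else 0)"

definition verlinde_one :: "nat \<Rightarrow> nat \<Rightarrow> int" where
  "verlinde_one k = (\<lambda>i. if i = 0 then 1 else 0)"

primrec verlinde_pow :: "nat \<Rightarrow> (nat \<Rightarrow> int) \<Rightarrow> nat \<Rightarrow> nat \<Rightarrow> int" where
  "verlinde_pow k a 0 = verlinde_one k"
| "verlinde_pow k a (Suc n) = verlinde_mult k a (verlinde_pow k a n)"

definition verlinde_gen :: "nat \<Rightarrow> nat \<Rightarrow> int" where
  "verlinde_gen k = (\<lambda>l. if l \<le> k then int l + 1 else 0)"

definition dcoef :: "nat \<Rightarrow> nat \<Rightarrow> nat \<Rightarrow> int" where
  "dcoef N k l = verlinde_pow k (verlinde_gen k) N l"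

definition Dmat :: "nat \<Rightarrow> nat \<Rightarrow> nat \<Rightarrow> int" where
  "Dmat k l' l = int (min l (k - l') + 1) * int (min l' (k - l) + 1)"

end

theory Submission
  imports Defs
begin

text \<open>Multiplication by \<open>g = \<Sum>a\<le>k. (a + 1) \<pi>_a\<close> is linear; its matrix entry from
\<open>\<pi>_b\<close> to \<open>\<pi>_l\<close> is the sum of \<open>a + 1\<close> over those \<open>a\<close> for which \<open>\<pi>_l\<close> occurs in
\<open>\<pi>_a \<pi>_b\<close>. By the fusion rule these \<open>a\<close> form the progression \<open>d, d + 2, \<dots>, d + 2m\<close>
with \<open>d = |b - l|\<close> and \<open>m = min b l (k - b) (k - l)\<close>, so the entry is
\<open>(m + 1) (d + m + 1) = Dmat k b l\<close>. The initial value is the column \<open>b = 0\<close>, as \<open>g = g \<pi>_0\<close>.\<close>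

lemma same_parity_interval_eq_image:
  fixes d m :: nat
  shows "{a. d \<le> a \<and> a \<le> d + 2 * m \<and> even (a + d)} = (\<lambda>j. d + 2 * j) ` {..m}"
proof (intro set_eqI iffI)
  fix a :: nat
  assume "a \<in> {a. d \<le> a \<and> a \<le> d + 2 * m \<and> even (a + d)}"
  then have "d \<le> a" "a \<le> d + 2 * m" "even (a - d)" by auto
  then show "a \<in> (\<lambda>j. d + 2 * j) ` {..m}"
    by (auto elim!: evenE intro!: image_eqI[where x = "(a - d) div 2"])
qed auto

lemma sum_same_parity_interval:
  fixes d m :: nat
  shows "(\<Sum>a | d \<le> a \<and> a \<le> d + 2 * m \<and> even (a + d). int a + 1) = int (m + 1) * int (d + m + 1)"
proof -
  have "(\<Sum>a | d \<le> a \<and> a \<le> d + 2 * m \<and> even (a + d). int a + 1) = (\<Sum>j\<le>m. int d + 2 * int j + 1)"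
    unfolding same_parity_interval_eq_image by (subst sum.reindex) (auto simp: inj_on_def)
  also have "\<dots> = int (m + 1) * int (d + m + 1)"
    by (induction m) (auto simp: algebra_simps)
  finally show ?thesis .
qed

lemma verlinde_coeff_eq_of_bool:
  assumes "a \<le> k" "b \<le> k" "l \<le> k"
  shows "verlinde_coeff k a b l = of_bool
    (max b l - min b l \<le> a \<and> a \<le> max b l - min b l + 2 * min (min b l) (k - max b l)
     \<and> even (a + b + l))"
proof -
  have "even (int l + int a - int b) \<longleftrightarrow> even (a + b + l)"
    by (smt (verit) even_add even_of_nat_iff)
  then show ?thesis
    using assms unfolding verlinde_coeff_def by (auto simp: min_def max_def)
qed

lemma sum_gen_times_verlinde_coeff:
  assumes "b \<le> k" "l \<le> k"
  shows "(\<Sum>a\<le>k. (int a + 1) * verlinde_coeff k a b l) = Dmat k b l"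
proof -
  define d where "d = max b l - min b l"
  define m where "m = min (min b l) (k - max b l)"
  define S where "S = {a. d \<le> a \<and> a \<le> d + 2 * m \<and> even (a + d)}"
  have "b + l = d + 2 * min b l" and "d + 2 * m \<le> k"
    using assms unfolding d_def m_def by (auto simp: min_def max_def)
  then have parity: "even (a + b + l) \<longleftrightarrow> even (a + d)" for a
    by (simp add: add.assoc)
  have "verlinde_coeff k a b l = of_bool (a \<in> S)" if "a \<le> k" for a
  proof -
    have "verlinde_coeff k a b l = of_bool (d \<le> a \<and> a \<le> d + 2 * m \<and> even (a + b + l))"
      using verlinde_coeff_eq_of_bool[OF that assms] unfolding d_def m_def .
    then show ?thesis
      unfolding S_def parity by simp
  qed
  then have "(\<Sum>a\<le>k. (int a + 1) * verlinde_coeff k a b l) = (\<Sum>a\<in>S. int a + 1)"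
    using \<open>d + 2 * m \<le> k\<close> by (simp add: S_def Int_absorb1 subset_eq)
  also have "\<dots> = int (m + 1) * int (d + m + 1)"
    unfolding S_def by (rule sum_same_parity_interval)
  also have "\<dots> = Dmat k b l"
    using assms unfolding Dmat_def d_def m_def by (auto simp: min_def max_def)
  finally show ?thesis .
qed

lemma verlinde_mult_gen:
  assumes "l \<le> k"
  shows "verlinde_mult k (verlinde_gen k) x l = (\<Sum>b\<le>k. Dmat k b l * x b)"
proof -
  have "verlinde_mult k (verlinde_gen k) x l
      = (\<Sum>a\<le>k. \<Sum>b\<le>k. x b * ((int a + 1) * verlinde_coeff k a b l))"
    using assms unfolding verlinde_mult_def verlinde_gen_def
    by (auto intro!: sum.cong simp: algebra_simps)
  also have "\<dots> = (\<Sum>b\<le>k. x b * (\<Sum>a\<le>k. (int a + 1) * verlinde_coeff k a b l))"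
    by (subst sum.swap) (simp add: sum_distrib_left)
  also have "\<dots> = (\<Sum>b\<le>k. Dmat k b l * x b)"
    using assms by (simp add: sum_gen_times_verlinde_coeff mult.commute)
  finally show ?thesis .
qed

theorem lemma3p2p1:
  fixes k l N :: nat
  assumes "k > 0" and "l \<le> k" and "N \<ge> 1"
  shows "dcoef (N + 1) k l = (\<Sum>l'\<le>k. Dmat k l' l * dcoef N k l')
         \<and> dcoef 1 k l = int l + 1"
proof
  show "dcoef (N + 1) k l = (\<Sum>l'\<le>k. Dmat k l' l * dcoef N k l')"
    unfolding dcoef_def using verlinde_mult_gen[OF assms(2)] by simp
  have "dcoef 1 k l = (\<Sum>b\<le>k. Dmat k b l * verlinde_one k b)"
    unfolding dcoef_def using verlinde_mult_gen[OF assms(2)] by simp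
  also have "\<dots> = Dmat k 0 l"
    by (simp add: verlinde_one_def if_distrib sum.delta cong: if_cong)
  also have "\<dots> = int l + 1"
    using assms(2) by (simp add: Dmat_def)
  finally show "dcoef 1 k l = int l + 1" .
qed

end
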